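(* Let $\mathcal{X}$ be the set of order types of linear orders that embed into $U$. Then $\mathcal{X}$ is closed under $\cdot_\omega$ and $\cdot_\omega$ is associative on $\mathcal{X}$; i.e. $\langle\mathcal{X},\cdot_\omega\rangle$ is a semigroup.
   Context: The countable condensation $\sim_\omega$ on a linear order $L$: $x\sim_\omega y$ iff the closed interval between $x$ and $y$ is countable; $L/\!\sim_\omega$ is the linear order of its classes. $ML$ denotes the lexicographic product (each element of $M$ replaced by a copy of $L$). $M\cdot_\omega L$ is the order type of $ML/\!\sim_\omega$. $U$ is the linear order $R^*+\mathbb{Q}+R$, where $R$ is obtained from $\omega_1$ by replacing each $\alpha<\omega_1$ with a point $u_\alpha$ followed by a copy of the rationals, $R^*$ is the reverse of $R$, and the middle summand is a copy of the rationals. *)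

theory Defs
  imports Main "HOL-Library.Countable_Set"
begin

text \<open>Linear orders are represented as non-strict order relations (Linear_order r),
  with carrier Field r.\<close>

definition order_embeds :: "'a rel \<Rightarrow> 'b rel \<Rightarrow> bool" where
  "order_embeds r s \<longleftrightarrow> (\<exists>f. inj_on f (Field r) \<and> f ` Field r \<subseteq> Field s \<and>
     (\<forall>x\<in>Field r. \<forall>y\<in>Field r. (x, y) \<in> r \<longleftrightarrow> (f x, f y) \<in> s))"

definition order_iso :: "'a rel \<Rightarrow> 'b rel \<Rightarrow> bool" where
  "order_iso r s \<longleftrightarrow> (\<exists>f. bij_betw f (Field r) (Field s) \<and>
     (\<forall>x\<in>Field r. \<forall>y\<in>Field r. (x, y) \<in> r \<longleftrightarrow> (f x, f y) \<in> s))"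

text \<open>Lexicographic product ML: each element of M replaced by a copy of L.\<close>
definition lexprod :: "'a rel \<Rightarrow> 'b rel \<Rightarrow> ('a \<times> 'b) rel" where
  "lexprod M L = {((m, l), (m', l')). m \<in> Field M \<and> m' \<in> Field M \<and> l \<in> Field L \<and> l' \<in> Field L \<and>
      (((m, m') \<in> M \<and> m \<noteq> m') \<or> (m = m' \<and> (l, l') \<in> L))}"

definition closed_interval :: "'a rel \<Rightarrow> 'a \<Rightarrow> 'a \<Rightarrow> 'a set" where
  "closed_interval r x y = {z \<in> Field r. ((x, z) \<in> r \<and> (z, y) \<in> r) \<or> ((y, z) \<in> r \<and> (z, x) \<in> r)}"

definition count_equiv :: "'a rel \<Rightarrow> 'a rel" where
  "count_equiv r = {(x, y). x \<in> Field r \<and> y \<in> Field r \<and> countable (closed_interval r x y)}"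

definition count_cond :: "'a rel \<Rightarrow> 'a set rel" where
  "count_cond r = {(C, D). C \<in> Field r // count_equiv r \<and> D \<in> Field r // count_equiv r \<and>
      (\<exists>x\<in>C. \<exists>y\<in>D. (x, y) \<in> r)}"

definition omega_mult :: "'a rel \<Rightarrow> 'b rel \<Rightarrow> ('a \<times> 'b) set rel" where
  "omega_mult M L = count_cond (lexprod M L)"

definition osum :: "'a rel \<Rightarrow> 'b rel \<Rightarrow> ('a + 'b) rel" where
  "osum r s = {(Inl x, Inl y) | x y. (x, y) \<in> r} \<union> {(Inr x, Inr y) | x y. (x, y) \<in> s}
     \<union> {(Inl x, Inr y) | x y. x \<in> Field r \<and> y \<in> Field s}"

abbreviation omega1 :: "nat set rel" where
  "omega1 \<equiv> cardSuc natLeq"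

definition ratQ :: "rat rel" where
  "ratQ = {(p, q). p \<le> q}"

definition pointQ :: "rat option rel" where
  "pointQ = {(a, b). case a of None \<Rightarrow> True
                     | Some p \<Rightarrow> (case b of None \<Rightarrow> False | Some q \<Rightarrow> p \<le> q)}"

text \<open>R: omega_1 with each alpha replaced by u_alpha followed by a copy of Q.\<close>
definition R_order :: "(nat set \<times> rat option) rel" where
  "R_order = lexprod omega1 pointQ"

definition U_order :: "((nat set \<times> rat option) + (rat + (nat set \<times> rat option))) rel" where
  "U_order = osum (converse R_order) (osum ratQ R_order)"

definition in_X :: "'a rel \<Rightarrow> bool" where
  "in_X r \<longleftrightarrow> Linear_order r \<and> order_embeds r U_order"

end

theory Submission
  imports Defs "HOL-Library.Countable_Set_Type"
begin

text \<open>U is the union of a countable part (the middle copy of Q) with a part R* in which every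
  final segment is countable and a part R in which every initial segment is countable. This shape
  passes to suborders, so every L in X has only countable closed intervals, and if L is
  uncountable then all its final segments or all its initial segments are uncountable.
  Consequently, for nonempty M and L in X, ML/~omega is a single point when L is countable; when
  L is uncountable, two points of ML are equivalent iff they lie in the same copy of L, so
  ML/~omega is isomorphic to M. Closure and associativity follow by distinguishing whether L and
  K are countable.\<close>

lemma Linear_orderD:
  assumes "Linear_order r"
  shows "Refl r" and "trans r" and "antisym r" and "Total r"
  using partial_order_onD assms unfolding linear_order_on_def by auto

lemma Linear_order_total:
  assumes "Linear_order r" "x \<in> Field r" "y \<in> Field r"
  shows "(x, y) \<in> r \<or> (y, x) \<in> r"
  using Linear_orderD(1,4)[OF assms(1)] assms(2,3) refl_onD unfolding total_on_def by metis

lemma Field_eq_empty_iff: "Field r = {} \<longleftrightarrow> r = {}"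
  unfolding Field_def by auto

lemma closed_intervalI: "(x, z) \<in> r \<Longrightarrow> (z, y) \<in> r \<Longrightarrow> z \<in> closed_interval r x y"
  unfolding closed_interval_def by (auto intro: FieldI1)

lemma closed_interval_commute: "closed_interval r x y = closed_interval r y x"
  unfolding closed_interval_def by auto

subsection \<open>Order isomorphisms and embeddings\<close>

lemma order_iso_sym:
  assumes "order_iso r s"
  shows "order_iso s r"
proof -
  obtain f where f: "bij_betw f (Field r) (Field s)"
    and ord: "\<forall>x\<in>Field r. \<forall>y\<in>Field r. (x, y) \<in> r \<longleftrightarrow> (f x, f y) \<in> s"
    using assms unfolding order_iso_def by blast
  define g where "g = the_inv_into (Field r) f"
  have g: "bij_betw g (Field s) (Field r)"
    unfolding g_def by (rule bij_betw_the_inv_into[OF f])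
  have "(a, b) \<in> s \<longleftrightarrow> (g a, g b) \<in> r" if "a \<in> Field s" "b \<in> Field s" for a b
  proof -
    have "f (g a) = a" "f (g b) = b"
      unfolding g_def using f_the_inv_into_f_bij_betw[OF f] that by auto
    moreover have "g a \<in> Field r" "g b \<in> Field r"
      using bij_betwE[OF g] that by auto
    ultimately show ?thesis
      using ord by metis
  qed
  with g show ?thesis
    unfolding order_iso_def by blast
qed

lemma order_iso_trans:
  assumes "order_iso r s" "order_iso s t"
  shows "order_iso r t"
proof -
  obtain f where f: "bij_betw f (Field r) (Field s)"
    and f_ord: "\<forall>x\<in>Field r. \<forall>y\<in>Field r. (x, y) \<in> r \<longleftrightarrow> (f x, f y) \<in> s"
    using assms(1) unfolding order_iso_def by blast
  obtain g where g: "bij_betw g (Field s) (Field t)"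
    and g_ord: "\<forall>x\<in>Field s. \<forall>y\<in>Field s. (x, y) \<in> s \<longleftrightarrow> (g x, g y) \<in> t"
    using assms(2) unfolding order_iso_def by blast
  have "\<forall>x\<in>Field r. \<forall>y\<in>Field r. (x, y) \<in> r \<longleftrightarrow> ((g \<circ> f) x, (g \<circ> f) y) \<in> t"
    using f_ord g_ord bij_betwE[OF f] by simp
  with bij_betw_trans[OF f g] show ?thesis
    unfolding order_iso_def by blast
qed

lemma order_iso_singleton: "order_iso {(C, C)} {(D, D)}"
  unfolding order_iso_def by (rule exI[of _ "\<lambda>_. D"]) (simp add: bij_betw_def)

lemma order_iso_countable_Field:
  assumes "order_iso r s"
  shows "countable (Field r) \<longleftrightarrow> countable (Field s)"
proof -
  obtain f where "bij_betw f (Field r) (Field s)"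
    using assms unfolding order_iso_def by blast
  then show ?thesis
    by (rule countable_iff_bij)
qed

lemma order_iso_imp_order_embeds: "order_iso r s \<Longrightarrow> order_embeds r s"
  unfolding order_iso_def order_embeds_def bij_betw_def by blast

lemma order_iso_empty: "Field r = {} \<Longrightarrow> Field s = {} \<Longrightarrow> order_iso r s"
  unfolding order_iso_def by (simp add: bij_betw_def)

lemma order_embedsE:
  assumes "order_embeds r s"
  obtains f where "inj_on f (Field r)" and "\<And>x. x \<in> Field r \<Longrightarrow> f x \<in> Field s"
    and "\<And>x y. x \<in> Field r \<Longrightarrow> y \<in> Field r \<Longrightarrow> (x, y) \<in> r \<longleftrightarrow> (f x, f y) \<in> s"
  using assms unfolding order_embeds_def image_subset_iff by blast

lemma order_embeds_trans:
  assumes "order_embeds r s" "order_embeds s t"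
  shows "order_embeds r t"
proof -
  obtain f where f: "inj_on f (Field r)" "\<And>x. x \<in> Field r \<Longrightarrow> f x \<in> Field s"
    and f_ord: "\<And>x y. x \<in> Field r \<Longrightarrow> y \<in> Field r \<Longrightarrow> (x, y) \<in> r \<longleftrightarrow> (f x, f y) \<in> s"
    using assms(1) by (rule order_embedsE) blast
  obtain g where g: "inj_on g (Field s)" "\<And>x. x \<in> Field s \<Longrightarrow> g x \<in> Field t"
    and g_ord: "\<And>x y. x \<in> Field s \<Longrightarrow> y \<in> Field s \<Longrightarrow> (x, y) \<in> s \<longleftrightarrow> (g x, g y) \<in> t"
    using assms(2) by (rule order_embedsE) blast
  have "inj_on (g \<circ> f) (Field r)"
    using f g by (simp add: comp_inj_on image_subset_iff inj_on_subset)
  moreover have "(g \<circ> f) ` Field r \<subseteq> Field t"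
    using f g by auto
  moreover have "\<forall>x\<in>Field r. \<forall>y\<in>Field r. (x, y) \<in> r \<longleftrightarrow> ((g \<circ> f) x, (g \<circ> f) y) \<in> t"
    using f f_ord g_ord by simp
  ultimately show ?thesis
    unfolding order_embeds_def by blast
qed

lemma order_embeds_Linear_order:
  assumes "order_embeds r s" "Linear_order s"
  shows "Linear_order r"
proof -
  obtain f where inj: "inj_on f (Field r)" and into: "\<And>x. x \<in> Field r \<Longrightarrow> f x \<in> Field s"
    and ord: "\<And>x y. x \<in> Field r \<Longrightarrow> y \<in> Field r \<Longrightarrow> (x, y) \<in> r \<longleftrightarrow> (f x, f y) \<in> s"
    using assms(1) by (rule order_embedsE) blast
  note s = Linear_orderD[OF assms(2)]
  have F: "x \<in> Field r" "y \<in> Field r" if "(x, y) \<in> r" for x y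
    using that by (rule FieldI1, rule FieldI2)
  have rs: "(f x, f y) \<in> s" if "(x, y) \<in> r" for x y
    using ord[OF F[OF that]] that by simp
  have "r \<subseteq> Field r \<times> Field r"
    using F by auto
  moreover have "Refl r"
    by (rule refl_onI) (simp add: ord into refl_onD[OF s(1)])
  moreover have "trans r"
  proof (rule transI)
    fix x y z assume xy: "(x, y) \<in> r" and yz: "(y, z) \<in> r"
    have "(f x, f z) \<in> s"
      using transD[OF s(2) rs[OF xy] rs[OF yz]] .
    then show "(x, z) \<in> r"
      using ord[OF F(1)[OF xy] F(2)[OF yz]] by simp
  qed
  moreover have "antisym r"
  proof (rule antisymI)
    fix x y assume xy: "(x, y) \<in> r" and yx: "(y, x) \<in> r"
    have "f x = f y"
      using antisymD[OF s(3) rs[OF xy] rs[OF yx]] .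
    then show "x = y"
      using inj_onD[OF inj _ F[OF xy]] by simp
  qed
  moreover have "Total r"
  proof (rule total_onI)
    fix x y assume "x \<in> Field r" "y \<in> Field r"
    then show "(x, y) \<in> r \<or> (y, x) \<in> r"
      using Linear_order_total[OF assms(2) into into] ord by simp
  qed
  ultimately show ?thesis
    unfolding linear_order_on_def partial_order_on_def preorder_on_def by blast
qed

subsection \<open>The universal order U\<close>

context includes cardinal_syntax begin

lemma countable_underS_omega1: "countable (underS omega1 a)"
proof (cases "a \<in> Field omega1")
  case True
  have "|underS omega1 a| <o omega1"
    by (rule card_of_underS[OF cardSuc_Card_order[OF natLeq_Card_order] True])
  then have "|underS omega1 a| \<le>o natLeq"
    by (rule iffD1[OF cardSuc_ordLeq_ordLess[OF natLeq_Card_order card_of_Card_order]])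
  then show ?thesis
    by (rule iffD2[OF countable_card_le_natLeq])
next
  case False
  then show ?thesis
    by (simp add: underS_empty)
qed

end

lemma countable_under_R_order: "countable (under R_order x)"
proof (rule countable_subset)
  show "under R_order x \<subseteq> insert (fst x) (underS omega1 (fst x)) \<times> UNIV"
    unfolding under_def R_order_def lexprod_def underS_def by auto
  show "countable (insert (fst x) (underS omega1 (fst x)) \<times> (UNIV :: rat option set))"
    by (simp add: countable_underS_omega1)
qed

text \<open>For U, the parts A and C are the summands R* and R; the countable rest is the middle Q.\<close>
definition omega1_like_split :: "'a rel \<Rightarrow> bool" where
  "omega1_like_split r \<longleftrightarrow> (\<exists>A C. countable (Field r - A - C) \<and>
     (\<forall>x. countable (above r x \<inter> A)) \<and> (\<forall>x. countable (under r x \<inter> C)))"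

lemma omega1_like_split_U_order: "omega1_like_split U_order"
  unfolding omega1_like_split_def
proof (intro exI conjI allI)
  have "u \<in> range Inl \<or> u \<in> range (Inr \<circ> Inl) \<or> u \<in> range (Inr \<circ> Inr)" for u :: "'a + 'b + 'c"
    by (cases u rule: sum.exhaust, simp, rename_tac v, case_tac v) auto
  then have "Field U_order - range Inl - range (Inr \<circ> Inr) \<subseteq> range (Inr \<circ> Inl)"
    by blast
  then show "countable (Field U_order - range Inl - range (Inr \<circ> Inr))"
    by (rule countable_subset) simp
next
  fix u
  have "above U_order u \<inter> range Inl \<subseteq> Inl ` under R_order (projl u)"
    unfolding above_def under_def U_order_def osum_def by auto
  then show "countable (above U_order u \<inter> range Inl)"
    by (rule countable_subset) (simp add: countable_under_R_order)
  have "under U_order u \<inter> range (Inr \<circ> Inr) \<subseteq> (Inr \<circ> Inr) ` under R_order (projr (projr u))"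
    unfolding under_def U_order_def osum_def by auto
  then show "countable (under U_order u \<inter> range (Inr \<circ> Inr))"
    by (rule countable_subset) (simp add: countable_under_R_order)
qed

lemma omega1_like_split_order_embeds:
  assumes "order_embeds r s" "omega1_like_split s"
  shows "omega1_like_split r"
proof -
  obtain f where inj: "inj_on f (Field r)" and into: "\<And>x. x \<in> Field r \<Longrightarrow> f x \<in> Field s"
    and ord: "\<And>x y. x \<in> Field r \<Longrightarrow> y \<in> Field r \<Longrightarrow> (x, y) \<in> r \<longleftrightarrow> (f x, f y) \<in> s"
    using assms(1) by (rule order_embedsE) blast
  obtain A C where mid: "countable (Field s - A - C)"
    and A: "\<And>x. countable (above s x \<inter> A)" and C: "\<And>x. countable (under s x \<inter> C)"
    using assms(2) unfolding omega1_like_split_def by blast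
  define pre where "pre B = {x \<in> Field r. f x \<in> B}" for B
  have pre: "countable B \<Longrightarrow> countable (pre B)" for B
    unfolding pre_def using inj by (rule countable_image_inj_gen)
  have rs: "(f x, f y) \<in> s" if "(x, y) \<in> r" for x y
    using ord[OF FieldI1 FieldI2, OF that that] that by simp
  have "Field r - pre A - pre C \<subseteq> pre (Field s - A - C)"
    unfolding pre_def using into by auto
  moreover have "above r x \<inter> pre A \<subseteq> pre (above s (f x) \<inter> A)" for x
    unfolding pre_def above_def using rs by auto
  moreover have "under r x \<inter> pre C \<subseteq> pre (under s (f x) \<inter> C)" for x
    unfolding pre_def under_def using rs by auto
  ultimately show ?thesis
    unfolding omega1_like_split_def using mid A C pre countable_subset by meson
qed

definition countable_intervals :: "'a rel \<Rightarrow> bool" where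
  "countable_intervals r \<longleftrightarrow> (\<forall>x\<in>Field r. \<forall>y\<in>Field r. countable (closed_interval r x y))"

definition long_ends :: "'a rel \<Rightarrow> bool" where
  "long_ends r \<longleftrightarrow> (\<forall>x\<in>Field r. uncountable (above r x)) \<or> (\<forall>x\<in>Field r. uncountable (under r x))"

lemma omega1_like_split_countable_intervals:
  assumes "omega1_like_split r"
  shows "countable_intervals r"
proof -
  obtain A C where mid: "countable (Field r - A - C)"
    and A: "\<And>x. countable (above r x \<inter> A)" and C: "\<And>x. countable (under r x \<inter> C)"
    using assms unfolding omega1_like_split_def by blast
  have "closed_interval r x y \<subseteq> (Field r - A - C) \<union> (above r x \<inter> A) \<union> (above r y \<inter> A)
      \<union> (under r x \<inter> C) \<union> (under r y \<inter> C)" for x y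
    unfolding closed_interval_def above_def under_def by blast
  then show ?thesis
    unfolding countable_intervals_def using mid A C by (meson countable_Un countable_subset)
qed

lemma omega1_like_split_long_ends:
  assumes lin: "Linear_order r" and split: "omega1_like_split r" and unc: "uncountable (Field r)"
  shows "long_ends r"
proof -
  obtain A C where mid: "countable (Field r - A - C)"
    and A: "\<And>x. countable (above r x \<inter> A)" and C: "\<And>x. countable (under r x \<inter> C)"
    using split unfolding omega1_like_split_def by blast
  have "Field r \<subseteq> (Field r - A - C) \<union> (Field r \<inter> A) \<union> (Field r \<inter> C)"
    by blast
  then have "uncountable (Field r \<inter> A) \<or> uncountable (Field r \<inter> C)"
    using unc mid by (meson countable_Un countable_subset)
  then show ?thesis
  proof
    assume unc_A: "uncountable (Field r \<inter> A)"
    have "uncountable (under r x)" if "x \<in> Field r" for x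
    proof
      assume "countable (under r x)"
      moreover have "Field r \<inter> A \<subseteq> under r x \<union> (above r x \<inter> A)"
        using Linear_order_total[OF lin that] by (auto simp: under_def above_def)
      ultimately show False
        using unc_A A by (meson countable_Un countable_subset)
    qed
    then show ?thesis
      unfolding long_ends_def by blast
  next
    assume unc_C: "uncountable (Field r \<inter> C)"
    have "uncountable (above r x)" if "x \<in> Field r" for x
    proof
      assume "countable (above r x)"
      moreover have "Field r \<inter> C \<subseteq> above r x \<union> (under r x \<inter> C)"
        using Linear_order_total[OF lin that] by (auto simp: under_def above_def)
      ultimately show False
        using unc_C C by (meson countable_Un countable_subset)
    qed
    then show ?thesis
      unfolding long_ends_def by blast
  qed
qed

lemma in_X_omega1_like_split: "in_X r \<Longrightarrow> omega1_like_split r"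
  unfolding in_X_def using omega1_like_split_order_embeds omega1_like_split_U_order by blast

lemma in_X_countable_intervals: "in_X r \<Longrightarrow> countable_intervals r"
  by (rule omega1_like_split_countable_intervals[OF in_X_omega1_like_split])

lemma in_X_long_ends: "in_X r \<Longrightarrow> uncountable (Field r) \<Longrightarrow> long_ends r"
  using omega1_like_split_long_ends in_X_omega1_like_split unfolding in_X_def by blast

lemma in_X_order_iso: "order_iso r s \<Longrightarrow> in_X s \<Longrightarrow> in_X r"
  unfolding in_X_def
  using order_iso_imp_order_embeds order_embeds_trans order_embeds_Linear_order by blast

lemma in_X_empty: "Field r = {} \<Longrightarrow> in_X r"
  unfolding in_X_def order_embeds_def by (simp add: Field_eq_empty_iff)

lemma in_X_singleton: "in_X {(C, C)}"
proof -
  have "(Inr (Inl 0), Inr (Inl 0)) \<in> U_order"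
    by (simp add: U_order_def osum_def ratQ_def)
  then have "order_embeds {(C, C)} U_order"
    unfolding order_embeds_def by (intro exI[of _ "\<lambda>_. Inr (Inl 0)"]) (simp add: FieldI1)
  then show ?thesis
    unfolding in_X_def by simp
qed

subsection \<open>Lexicographic products and their countable condensation\<close>

lemma Field_lexprod_subset: "Field (lexprod M L) \<subseteq> Field M \<times> Field L"
  unfolding lexprod_def Field_def by auto

lemma lexprod_refl: "Refl L \<Longrightarrow> x \<in> Field M \<times> Field L \<Longrightarrow> (x, x) \<in> lexprod M L"
  by (cases x) (simp add: lexprod_def refl_onD)

lemma Field_lexprod:
  assumes "Refl L"
  shows "Field (lexprod M L) = Field M \<times> Field L"
proof (rule equalityI[OF Field_lexprod_subset], rule subsetI)
  fix x assume "x \<in> Field M \<times> Field L"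
  then show "x \<in> Field (lexprod M L)"
    by (rule FieldI1[OF lexprod_refl[OF assms]])
qed

lemma Refl_lexprod: "Refl L \<Longrightarrow> Refl (lexprod M L)"
  by (simp add: Field_lexprod lexprod_refl refl_onI)

lemma antisym_lexprod:
  assumes "antisym M" "antisym L"
  shows "antisym (lexprod M L)"
proof (rule antisymI)
  fix x y assume xy: "(x, y) \<in> lexprod M L" and yx: "(y, x) \<in> lexprod M L"
  obtain m l m' l' where x: "x = (m, l)" and y: "y = (m', l')"
    by (cases x, cases y)
  have "(m, m') \<in> M \<and> m \<noteq> m' \<or> m = m' \<and> (l, l') \<in> L"
    "(m', m) \<in> M \<and> m' \<noteq> m \<or> m' = m \<and> (l', l) \<in> L"
    using xy yx unfolding x y lexprod_def by simp_all
  then show "x = y"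
    unfolding x y using antisymD[OF assms(1)] antisymD[OF assms(2)] by blast
qed

lemma lexprod_fst:
  assumes "Refl M" "((m, l), (m', l')) \<in> lexprod M L"
  shows "(m, m') \<in> M"
  using assms unfolding lexprod_def by (auto intro: refl_onD)

lemma lexprod_between_same_fst:
  assumes "antisym M" "((m, l), (a, b)) \<in> lexprod M L" "((a, b), (m, l')) \<in> lexprod M L"
  shows "a = m \<and> (l, b) \<in> L \<and> (b, l') \<in> L"
proof -
  have "(m, a) \<in> M \<and> m \<noteq> a \<or> m = a" "(a, m) \<in> M \<and> a \<noteq> m \<or> a = m"
    using assms(2,3) unfolding lexprod_def by auto
  then have "a = m"
    using antisymD[OF assms(1)] by blast
  with assms(2,3) show ?thesis
    unfolding lexprod_def by simp
qed

lemma Field_count_cond: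
  assumes "Refl r" "antisym r"
  shows "Field (count_cond r) = Field r // count_equiv r"
proof
  show "Field (count_cond r) \<subseteq> Field r // count_equiv r"
    unfolding count_cond_def Field_def by auto
next
  show "Field r // count_equiv r \<subseteq> Field (count_cond r)"
  proof
    fix C assume C: "C \<in> Field r // count_equiv r"
    then obtain x where x: "x \<in> Field r" "C = count_equiv r `` {x}"
      unfolding quotient_def by auto
    have "closed_interval r x x \<subseteq> {x}"
      unfolding closed_interval_def using antisymD[OF assms(2)] by blast
    then have "countable (closed_interval r x x)"
      by (rule countable_subset) simp
    then have "x \<in> C"
      using x unfolding count_equiv_def by auto
    then have "(C, C) \<in> count_cond r"
      using C refl_onD[OF assms(1) x(1)] unfolding count_cond_def by blast
    then show "C \<in> Field (count_cond r)"
      by (rule FieldI1)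
  qed
qed

lemma Field_omega_mult:
  assumes "Linear_order M" "Linear_order L"
  shows "Field (omega_mult M L) = (Field M \<times> Field L) // count_equiv (lexprod M L)"
proof -
  note M = Linear_orderD[OF assms(1)] and L = Linear_orderD[OF assms(2)]
  show ?thesis
    unfolding omega_mult_def Field_count_cond[OF Refl_lexprod[OF L(1)] antisym_lexprod[OF M(3) L(3)]]
      Field_lexprod[OF L(1)] ..
qed

lemma Field_omega_mult_eq_empty_iff:
  assumes "Linear_order M" "Linear_order L"
  shows "Field (omega_mult M L) = {} \<longleftrightarrow> Field M = {} \<or> Field L = {}"
  by (simp add: Field_omega_mult[OF assms])

lemma count_cond_eq_singleton:
  assumes "countable_intervals r" "Field r \<noteq> {}"
  shows "count_cond r = {(Field r, Field r)}"
proof -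
  have "count_equiv r = Field r \<times> Field r"
    using assms(1) unfolding count_equiv_def countable_intervals_def by auto
  then have classes: "Field r // count_equiv r = {Field r}"
    using assms(2) unfolding quotient_def by auto
  obtain x y where "(x, y) \<in> r"
    using assms(2) by (auto simp: Field_eq_empty_iff)
  then show ?thesis
    unfolding count_cond_def classes by (auto intro: FieldI1 FieldI2)
qed

lemma countable_intervals_lexprod:
  assumes "Refl M" "countable_intervals M" "countable (Field L)"
  shows "countable_intervals (lexprod M L)"
  unfolding countable_intervals_def
proof (intro ballI)
  fix x y assume x: "x \<in> Field (lexprod M L)" and y: "y \<in> Field (lexprod M L)"
  obtain m l m' l' where xy: "x = (m, l)" "y = (m', l')"
    by (cases x, cases y)
  have m: "m \<in> Field M" "m' \<in> Field M"
    using x y Field_lexprod_subset[of M L] unfolding xy by auto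
  have "closed_interval (lexprod M L) x y \<subseteq> closed_interval M m m' \<times> Field L"
  proof (clarify)
    fix a b assume ab: "(a, b) \<in> closed_interval (lexprod M L) x y"
    then have "(a, b) \<in> Field M \<times> Field L"
      using Field_lexprod_subset[of M L] unfolding closed_interval_def by blast
    moreover have "((m, l), (a, b)) \<in> lexprod M L \<and> ((a, b), (m', l')) \<in> lexprod M L \<or>
        ((m', l'), (a, b)) \<in> lexprod M L \<and> ((a, b), (m, l)) \<in> lexprod M L"
      using ab unfolding closed_interval_def xy by blast
    then have "(m, a) \<in> M \<and> (a, m') \<in> M \<or> (m', a) \<in> M \<and> (a, m) \<in> M"
      using lexprod_fst[where L = L, OF assms(1)] by blast
    ultimately show "a \<in> closed_interval M m m' \<and> b \<in> Field L"
      unfolding closed_interval_def by blast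
  qed
  moreover have "countable (closed_interval M m m' \<times> Field L)"
    using assms(2,3) m unfolding countable_intervals_def by blast
  ultimately show "countable (closed_interval (lexprod M L) x y)"
    by (rule countable_subset)
qed

lemma omega_mult_singleton:
  assumes "Refl M" "Refl L" "countable_intervals M" "countable (Field L)"
    and "Field M \<noteq> {}" "Field L \<noteq> {}"
  shows "omega_mult M L = {(Field M \<times> Field L, Field M \<times> Field L)}"
  using count_cond_eq_singleton[OF countable_intervals_lexprod[OF assms(1,3,4)]] assms(5,6)
  unfolding omega_mult_def Field_lexprod[OF assms(2)] by simp

lemma countable_closed_interval_lexprod_fiber:
  assumes "antisym M" "countable (closed_interval L l l')"
  shows "countable (closed_interval (lexprod M L) (m, l) (m, l'))"
proof -
  have "closed_interval (lexprod M L) (m, l) (m, l') \<subseteq> {m} \<times> closed_interval L l l'"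
  proof
    fix z assume z: "z \<in> closed_interval (lexprod M L) (m, l) (m, l')"
    obtain a b where ab: "z = (a, b)"
      by (cases z)
    have "b \<in> Field L"
      using z Field_lexprod_subset[of M L] unfolding ab closed_interval_def by blast
    then show "z \<in> {m} \<times> closed_interval L l l'"
      using z lexprod_between_same_fst[where L = L, OF assms(1)] unfolding ab closed_interval_def by blast
  qed
  moreover have "countable ({m} \<times> closed_interval L l l')"
    using assms(2) by simp
  ultimately show ?thesis
    by (rule countable_subset)
qed

text \<open>Between two distinct copies of L the interval contains a final segment of the first copy
  and an initial segment of the second.\<close>
lemma uncountable_closed_interval_lexprod:
  assumes "(m, m') \<in> M" "m \<noteq> m'" "l \<in> Field L" "l' \<in> Field L" "long_ends L"
  shows "uncountable (closed_interval (lexprod M L) (m, l) (m', l'))"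
proof
  let ?I = "closed_interval (lexprod M L) (m, l) (m', l')"
  assume countable: "countable ?I"
  have m: "m \<in> Field M" "m' \<in> Field M"
    using assms(1) by (rule FieldI1, rule FieldI2)
  have inj: "inj_on (Pair a) A" for a :: 'a and A :: "'b set"
    by (simp add: inj_on_def)
  have "(m, b) \<in> ?I" if "(l, b) \<in> L" for b
  proof (rule closed_intervalI)
    show "((m, l), (m, b)) \<in> lexprod M L" "((m, b), (m', l')) \<in> lexprod M L"
      using assms(1-4) m FieldI2[OF that] that by (simp_all add: lexprod_def)
  qed
  then have "Pair m ` above L l \<subseteq> ?I"
    unfolding above_def by blast
  then have "countable (above L l)"
    by (rule countable_image_inj_on[OF countable_subset[OF _ countable] inj])
  moreover have "(m', b) \<in> ?I" if "(b, l') \<in> L" for b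
  proof (rule closed_intervalI)
    show "((m, l), (m', b)) \<in> lexprod M L" "((m', b), (m', l')) \<in> lexprod M L"
      using assms(1-4) m FieldI1[OF that] that by (simp_all add: lexprod_def)
  qed
  then have "Pair m' ` under L l' \<subseteq> ?I"
    unfolding under_def by blast
  then have "countable (under L l')"
    by (rule countable_image_inj_on[OF countable_subset[OF _ countable] inj])
  ultimately show False
    using assms(3-5) unfolding long_ends_def by blast
qed

lemma count_equiv_lexprod_class:
  assumes M: "Linear_order M" and L: "Linear_order L" "countable_intervals L" "long_ends L"
    and m: "m \<in> Field M" and l: "l \<in> Field L"
  shows "count_equiv (lexprod M L) `` {(m, l)} = {m} \<times> Field L"
proof -
  have "countable (closed_interval (lexprod M L) (m, l) (m', l')) \<longleftrightarrow> m' = m"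
    if m': "m' \<in> Field M" and l': "l' \<in> Field L" for m' l'
  proof
    assume countable: "countable (closed_interval (lexprod M L) (m, l) (m', l'))"
    show "m' = m"
    proof (rule ccontr)
      assume ne: "m' \<noteq> m"
      from Linear_order_total[OF M m m'] show False
      proof
        assume "(m, m') \<in> M"
        from uncountable_closed_interval_lexprod[OF this ne[symmetric] l l' L(3)] countable
        show False ..
      next
        assume "(m', m) \<in> M"
        from uncountable_closed_interval_lexprod[OF this ne l' l L(3)] countable
        show False
          by (simp add: closed_interval_commute)
      qed
    qed
  next
    assume "m' = m"
    moreover have "countable (closed_interval L l l')"
      using L(2) l l' unfolding countable_intervals_def by blast
    ultimately show "countable (closed_interval (lexprod M L) (m, l) (m', l'))"
      using countable_closed_interval_lexprod_fiber[OF Linear_orderD(3)[OF M]] by simp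
  qed
  then show ?thesis
    using m l unfolding count_equiv_def Field_lexprod[OF Linear_orderD(1)[OF L(1)]] by auto
qed

lemma order_iso_omega_mult_long_ends:
  fixes M :: "'a rel" and L :: "'b rel"
  assumes M: "Linear_order M" and L: "Linear_order L" "countable_intervals L" "long_ends L"
    and "Field L \<noteq> {}"
  shows "order_iso M (omega_mult M L)"
proof -
  define copy where "copy m = {m} \<times> Field L" for m :: 'a
  obtain l0 where l0: "l0 \<in> Field L"
    using assms(5) by blast
  have classes: "Field (omega_mult M L) = copy ` Field M"
    unfolding Field_omega_mult[OF M L(1)] quotient_def copy_def
    using count_equiv_lexprod_class[OF assms(1-4)] l0 by auto
  have "inj_on copy (Field M)"
    using l0 unfolding copy_def inj_on_def by blast
  then have bij: "bij_betw copy (Field M) (Field (omega_mult M L))"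
    unfolding bij_betw_def classes by blast
  have "(x, y) \<in> M \<longleftrightarrow> (copy x, copy y) \<in> omega_mult M L" if "x \<in> Field M" "y \<in> Field M" for x y
  proof
    assume "(x, y) \<in> M"
    then have "((x, l0), (y, l0)) \<in> lexprod M L"
      using that l0 refl_onD[OF Linear_orderD(1)[OF L(1)]] unfolding lexprod_def by auto
    moreover have "copy x \<in> (Field M \<times> Field L) // count_equiv (lexprod M L)"
      "copy y \<in> (Field M \<times> Field L) // count_equiv (lexprod M L)"
      using that classes Field_omega_mult[OF M L(1)] by blast+
    ultimately show "(copy x, copy y) \<in> omega_mult M L"
      using l0 unfolding omega_mult_def count_cond_def copy_def Field_lexprod[OF Linear_orderD(1)[OF L(1)]]
      by blast
  next
    assume "(copy x, copy y) \<in> omega_mult M L"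
    then show "(x, y) \<in> M"
      unfolding omega_mult_def count_cond_def copy_def
      using lexprod_fst[where L = L, OF Linear_orderD(1)[OF M]] by auto
  qed
  with bij show ?thesis
    unfolding order_iso_def by blast
qed

subsection \<open>Closure and associativity\<close>

lemma omega_mult_singleton_in_X:
  assumes "in_X M" "Linear_order L" "countable (Field L)" "Field M \<noteq> {}" "Field L \<noteq> {}"
  shows "omega_mult M L = {(Field M \<times> Field L, Field M \<times> Field L)}"
proof -
  have "Refl M"
    using assms(1) Linear_orderD(1) unfolding in_X_def by blast
  then show ?thesis
    by (rule omega_mult_singleton[OF _ Linear_orderD(1)[OF assms(2)] in_X_countable_intervals[OF assms(1)]
        assms(3-5)])
qed

lemma order_iso_omega_mult_uncountable:
  assumes "Linear_order M" "in_X L" "uncountable (Field L)"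
  shows "order_iso M (omega_mult M L)"
proof (rule order_iso_omega_mult_long_ends[OF assms(1)])
  show "Linear_order L"
    using assms(2) unfolding in_X_def by blast
  show "countable_intervals L" "long_ends L"
    using in_X_countable_intervals[OF assms(2)] in_X_long_ends[OF assms(2,3)] .
  show "Field L \<noteq> {}"
    using assms(3) by auto
qed

lemma in_X_omega_mult:
  assumes M: "in_X M" and L: "in_X L"
  shows "in_X (omega_mult M L)"
proof -
  have lin: "Linear_order M" "Linear_order L"
    using assms unfolding in_X_def by blast+
  consider "Field M = {} \<or> Field L = {}" | "Field M \<noteq> {}" "Field L \<noteq> {}" "countable (Field L)"
    | "uncountable (Field L)"
    by blast
  then show ?thesis
  proof cases
    case 1
    then show ?thesis
      by (simp add: in_X_empty Field_omega_mult_eq_empty_iff[OF lin])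
  next
    case 2
    then show ?thesis
      by (simp add: omega_mult_singleton_in_X[OF M lin(2)] in_X_singleton)
  next
    case 3
    then show ?thesis
      by (rule in_X_order_iso[OF order_iso_sym[OF order_iso_omega_mult_uncountable[OF lin(1) L]] M])
  qed
qed

lemma omega_mult_assoc_countable:
  assumes M: "in_X M" and L: "in_X L" and K: "Linear_order K" "countable (Field K)"
    and ne: "Field M \<noteq> {}" "Field L \<noteq> {}" "Field K \<noteq> {}"
  shows "order_iso (omega_mult (omega_mult M L) K) (omega_mult M (omega_mult L K))"
proof -
  have lin: "Linear_order M" "Linear_order L"
    using M L unfolding in_X_def by blast+
  have LK: "omega_mult L K = {(Field L \<times> Field K, Field L \<times> Field K)}"
    by (rule omega_mult_singleton_in_X[OF L K ne(2,3)])
  then have "Linear_order (omega_mult L K)"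
    by simp
  moreover have "Field (omega_mult M L) \<noteq> {}"
    using ne by (simp add: Field_omega_mult_eq_empty_iff[OF lin])
  ultimately show ?thesis
    using LK ne by (simp add: omega_mult_singleton_in_X[OF in_X_omega_mult[OF M L] K]
        omega_mult_singleton_in_X[OF M] order_iso_singleton)
qed

lemma omega_mult_assoc_uncountable:
  assumes M: "in_X M" and L: "in_X L" and K: "in_X K" "uncountable (Field K)"
    and ne: "Field M \<noteq> {}" "Field L \<noteq> {}"
  shows "order_iso (omega_mult (omega_mult M L) K) (omega_mult M (omega_mult L K))"
proof -
  have LK: "in_X (omega_mult L K)"
    by (rule in_X_omega_mult[OF L K(1)])
  have lin: "Linear_order M" "Linear_order L" "Linear_order K"
    "Linear_order (omega_mult M L)" "Linear_order (omega_mult L K)"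
    using M L K(1) in_X_omega_mult[OF M L] LK unfolding in_X_def by blast+
  have iso_ML: "order_iso (omega_mult (omega_mult M L) K) (omega_mult M L)"
    using order_iso_sym[OF order_iso_omega_mult_uncountable[OF lin(4) K]] .
  have iso_L: "order_iso L (omega_mult L K)"
    using order_iso_omega_mult_uncountable[OF lin(2) K] .
  show ?thesis
  proof (cases "countable (Field L)")
    case True
    then have "countable (Field (omega_mult L K))"
      using order_iso_countable_Field[OF iso_L] by simp
    moreover have "Field (omega_mult L K) \<noteq> {}"
      using ne(2) K(2) by (auto simp: Field_omega_mult_eq_empty_iff[OF lin(2,3)])
    ultimately have "order_iso (omega_mult M L) (omega_mult M (omega_mult L K))"
      by (simp add: omega_mult_singleton_in_X[OF M lin(2) True ne]
          omega_mult_singleton_in_X[OF M lin(5) _ ne(1)] order_iso_singleton)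
    with iso_ML show ?thesis
      by (rule order_iso_trans)
  next
    case False
    then have "uncountable (Field (omega_mult L K))"
      using order_iso_countable_Field[OF iso_L] by simp
    then have "order_iso M (omega_mult M (omega_mult L K))"
      by (rule order_iso_omega_mult_uncountable[OF lin(1) LK])
    with iso_ML order_iso_omega_mult_uncountable[OF lin(1) L False] show ?thesis
      using order_iso_trans order_iso_sym by metis
  qed
qed

theorem theorem5p4:
  fixes M :: "'a rel" and L :: "'b rel" and K :: "'c rel"
  assumes "in_X M" and "in_X L" and "in_X K"
  shows "in_X (omega_mult M L) \<and>
         order_iso (omega_mult (omega_mult M L) K) (omega_mult M (omega_mult L K))"
proof
  show "in_X (omega_mult M L)"
    using assms(1,2) by (rule in_X_omega_mult)
  have lin: "Linear_order M" "Linear_order L" "Linear_order K"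
    "Linear_order (omega_mult M L)" "Linear_order (omega_mult L K)"
    using assms in_X_omega_mult[OF assms(1,2)] in_X_omega_mult[OF assms(2,3)]
    unfolding in_X_def by blast+
  consider "Field M = {} \<or> Field L = {} \<or> Field K = {}"
    | "Field M \<noteq> {}" "Field L \<noteq> {}" "Field K \<noteq> {}" "countable (Field K)"
    | "Field M \<noteq> {}" "Field L \<noteq> {}" "uncountable (Field K)"
    by blast
  then show "order_iso (omega_mult (omega_mult M L) K) (omega_mult M (omega_mult L K))"
  proof cases
    case 1
    then show ?thesis
      by (intro order_iso_empty) (auto simp: Field_omega_mult_eq_empty_iff lin)
  next
    case 2
    show ?thesis
      by (rule omega_mult_assoc_countable[OF assms(1,2) lin(3) 2(4) 2(1-3)])
  next
    case 3
    show ?thesis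
      by (rule omega_mult_assoc_uncountable[OF assms 3(3) 3(1,2)])
  qed
qed

end
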